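(* Let $F$ be a finite field of characteristic $2$ with $[F:\mathbb{F}_2]$ odd, and let $d$ be an invertible exponent over $F$. Then there exists $a\in F^*$ such that $|W_{F,d}(a)|\ge\sqrt{2|F|}$. *)

theory Defs
  imports Complex_Main
begin

text \<open>Absolute trace from a field with 2^n elements down to F_2 (values 0 or 1 in F).\<close>
definition abs_trace2 :: "nat \<Rightarrow> 'a::field \<Rightarrow> 'a" where
  "abs_trace2 n x = (\<Sum>i<n. x ^ (2 ^ i))"

definition walsh :: "nat \<Rightarrow> nat \<Rightarrow> 'a::{finite,field} \<Rightarrow> real" where
  "walsh n d a = (\<Sum>x\<in>(UNIV::'a set).
      (if abs_trace2 n (x ^ d + a * x) = 0 then 1 else -1))"

definition invertible_exponent :: "'a::{finite,field} itself \<Rightarrow> nat \<Rightarrow> bool" where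
  "invertible_exponent (T :: 'a itself) d \<longleftrightarrow> 0 < d \<and> coprime d (card (UNIV :: 'a set) - 1)"

end

theory Submission
  imports Defs "HOL-Computational_Algebra.Primes"
begin

text \<open>
  Let \<open>\<psi>(t) = (-1)^Tr(t)\<close>, \<open>q = |F|\<close> and \<open>W = W\<^sub>F\<^sub>,\<^sub>d\<close>. If \<open>\<psi>\<close> is trivial then
  \<open>W(1) = q\<close>. Otherwise orthogonality of additive characters gives \<open>\<Sum> W(a)\<^sup>2 = q\<^sup>2\<close> and
  \<open>\<Sum> W(a)\<^sup>4 = q S\<close>, where \<open>S\<close> is the sum of \<open>\<psi>(x\<^sup>d + (x+s)\<^sup>d + y\<^sup>d + (y+s)\<^sup>d)\<close> over all
  triples \<open>(x,y,s)\<close>. The argument of \<open>\<psi>\<close> is homogeneous of degree \<open>d\<close> and \<open>l \<mapsto> l\<^sup>d\<close>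
  permutes \<open>F\<close>, so averaging \<open>S\<close> over the scalings \<open>(x,y,s) \<mapsto> (lx,ly,ls)\<close> gives
  \<open>(q-1) S = q Z - q\<^sup>3\<close>, where \<open>Z\<close> counts the zeros of that argument. They include the planes
  \<open>s = 0\<close>, \<open>x = y\<close>, \<open>x = y + s\<close>, so \<open>Z \<ge> 3q\<^sup>2 - 2q\<close> and \<open>S \<ge> 2q\<^sup>2\<close>. Hence
  \<open>\<Sum> W\<^sup>4 \<ge> 2q \<Sum> W\<^sup>2\<close>, which forces \<open>W(a)\<^sup>2 \<ge> 2q\<close> for some \<open>a\<close> with \<open>W(a) \<noteq> 0\<close>, and
  \<open>a \<noteq> 0\<close> because \<open>W(0) = \<Sum> \<psi>(x\<^sup>d) = 0\<close>.
\<close>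

lemma power_card_minus_one_eq_1:
  fixes x :: "'a::{finite,field}"
  assumes "x \<noteq> 0"
  shows "x ^ (card (UNIV::'a set) - 1) = 1"
proof -
  have "(\<Prod>y\<in>UNIV-{0}. x * y) = (\<Prod>y\<in>UNIV-{0}. y)"
    by (rule prod.reindex_bij_witness[of _ "\<lambda>y. y / x" "\<lambda>y. x * y"]) (use assms in auto)
  then have "x ^ card (UNIV - {0::'a}) * (\<Prod>y\<in>UNIV-{0}. y) = (\<Prod>y\<in>UNIV-{0}. y)"
    by (simp add: prod.distrib)
  then show ?thesis
    by (simp add: card_Diff_singleton)
qed

lemma power_card_eq_self: "(x::'a::{finite,field}) ^ card (UNIV::'a set) = x"
proof (cases "x = 0")
  case False
  have "card (UNIV::'a set) = Suc (card (UNIV::'a set) - 1)"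
    using finite_UNIV_card_ge_0[where 'a='a] by simp
  then show ?thesis
    using power_card_minus_one_eq_1[OF False] by (metis power_Suc mult_1_right)
qed (simp add: finite_UNIV_card_ge_0)

lemma two_le_card_UNIV_field: "2 \<le> card (UNIV::'a::{finite,field} set)"
  using card_mono[of UNIV "{0::'a, 1}"] by simp

lemma invertible_exponent_power_inverse:
  assumes "invertible_exponent TYPE('a::{finite,field}) d"
  obtains u where "\<And>x::'a. (x ^ d) ^ u = x"
proof -
  let ?m = "card (UNIV::'a set) - 1"
  have "d > 0" and "coprime d ?m"
    using assms by (auto simp: invertible_exponent_def)
  then obtain u v where uv: "d * u = ?m * v + 1"
    using bezout_nat[of d ?m] by auto
  have "(x ^ d) ^ u = x" for x :: 'a
  proof (cases "x = 0")
    case False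
    have "(x ^ d) ^ u = (x ^ ?m) ^ v * x"
      by (simp add: uv power_add flip: power_mult)
    then show ?thesis
      using power_card_minus_one_eq_1[OF False] by simp
  next
    case True
    have "0 < d * u"
      using uv by simp
    then show ?thesis
      using True by (metis power_mult zero_power)
  qed
  then show ?thesis
    by (rule that)
qed

lemma bij_power_invertible_exponent:
  assumes "invertible_exponent TYPE('a::{finite,field}) d"
  shows "bij (\<lambda>x::'a. x ^ d)"
proof -
  obtain u where "\<And>x::'a. (x ^ d) ^ u = x"
    using invertible_exponent_power_inverse[OF assms] by blast
  then have "inj (\<lambda>x::'a. x ^ d)"
    by (metis injI)
  then show ?thesis
    by (simp add: bij_def finite_UNIV_inj_surj)
qed

lemma CHAR_2_add_self:
  assumes "CHAR('a::comm_ring_1) = 2"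
  shows "(x::'a) + x = 0"
  by (metis assms mult_2 mult_zero_left of_nat_CHAR of_nat_numeral)

lemma CHAR_2_add_eq_0_iff:
  assumes "CHAR('a::comm_ring_1) = 2"
  shows "(x::'a) + y = 0 \<longleftrightarrow> x = y"
  by (metis CHAR_2_add_self[OF assms] add_left_cancel)

lemma sum_UNIV_add_reindex:
  "(\<Sum>x\<in>UNIV. f (x + c)) = (\<Sum>x\<in>(UNIV::'a::ab_group_add set). f x)"
  by (rule sum.reindex_bij_witness[of _ "\<lambda>x. x - c" "\<lambda>x. x + c"]) auto

lemma sum_UNIV_mult_reindex:
  fixes c :: "'a::field"
  assumes "c \<noteq> 0"
  shows "(\<Sum>x\<in>UNIV. f (c * x)) = (\<Sum>x\<in>UNIV. f x)"
  by (rule sum.reindex_bij_witness[of _ "\<lambda>x. x / c" "\<lambda>x. c * x"]) (use assms in auto)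

lemma sum_UNIV_power_reindex:
  assumes "invertible_exponent TYPE('a::{finite,field}) d"
  shows "(\<Sum>x\<in>UNIV. f (x ^ d)) = (\<Sum>x\<in>(UNIV::'a set). f x)"
  using sum.reindex_bij_betw[OF bij_power_invertible_exponent[OF assms], of f] by simp

lemma sum_UNIV_prod3:
  "(\<Sum>(x, y, z)\<in>UNIV. f x y z) = (\<Sum>x\<in>UNIV. \<Sum>y\<in>UNIV. \<Sum>z\<in>UNIV. f x y z)"
  by (simp add: sum.cartesian_product flip: UNIV_Times_UNIV)

lemma sum_three_planes:
  fixes q :: real
  assumes q: "q = real (card (UNIV::'a::{finite,ab_group_add} set))"
  shows "(\<Sum>(x, y, s)\<in>(UNIV::('a \<times> 'a \<times> 'a) set).
            (if s = 0 \<or> x = y \<or> x = y + s then q else 0) - 1) = 2 * q\<^sup>2 * (q - 1)"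
proof -
  have line: "(\<Sum>s\<in>UNIV. (if s = 0 \<or> x = y \<or> x = y + s then q else 0) - 1)
      = (if x = y then q * (q - 1) else q)" for x y :: 'a
  proof (cases "x = y")
    case False
    have "(\<Sum>s\<in>UNIV. (if s = 0 \<or> x = y \<or> x = y + s then q else 0) - 1)
        = (\<Sum>s\<in>UNIV. (if s = 0 then q else 0) + (if s = x - y then q else 0) - 1)"
      using False by (intro sum.cong refl) (auto simp: algebra_simps)
    then show ?thesis
      using False q by (simp add: sum.distrib sum_subtractf)
  qed (use q in \<open>simp add: algebra_simps\<close>)
  have plane: "(\<Sum>y\<in>UNIV. if x = y then q * (q - 1) else q) = 2 * q * (q - 1)" for x :: 'a
  proof -
    have "(\<Sum>y\<in>UNIV. if x = y then q * (q - 1) else q)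
        = (\<Sum>y\<in>UNIV. q + (if x = y then q * (q - 2) else 0))"
      by (intro sum.cong refl) (auto simp: algebra_simps)
    then show ?thesis
      using q by (simp add: sum.distrib algebra_simps)
  qed
  show ?thesis
    using q by (simp add: sum_UNIV_prod3 line plane power2_eq_square)
qed

lemma exists_square_ge_of_moments:
  fixes w :: "'b \<Rightarrow> real"
  assumes "finite A"
    and pos: "0 < (\<Sum>a\<in>A. (w a)\<^sup>2)"
    and moments: "c * (\<Sum>a\<in>A. (w a)\<^sup>2) \<le> (\<Sum>a\<in>A. (w a) ^ 4)"
  shows "\<exists>a\<in>A. w a \<noteq> 0 \<and> c \<le> (w a)\<^sup>2"
proof (rule ccontr)
  assume "\<not> ?thesis"
  then have small: "(w a)\<^sup>2 < c" if "a \<in> A" "w a \<noteq> 0" for a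
    using that by auto
  have bound: "(w a) ^ 4 \<le> c * (w a)\<^sup>2" and strict: "w a \<noteq> 0 \<Longrightarrow> (w a) ^ 4 < c * (w a)\<^sup>2"
    if "a \<in> A" for a
  proof -
    have fourth: "(w a) ^ 4 = (w a)\<^sup>2 * (w a)\<^sup>2"
      by simp
    show "(w a) ^ 4 < c * (w a)\<^sup>2" if "w a \<noteq> 0"
    proof -
      have "(w a)\<^sup>2 * (w a)\<^sup>2 < c * (w a)\<^sup>2"
        using small[OF \<open>a \<in> A\<close> that] that by (intro mult_strict_right_mono) auto
      then show ?thesis
        by (simp only: fourth)
    qed
    then show "(w a) ^ 4 \<le> c * (w a)\<^sup>2"
      by (cases "w a = 0") auto
  qed
  obtain a0 where "a0 \<in> A" "w a0 \<noteq> 0"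
  proof (rule ccontr)
    assume "\<not> thesis"
    then have "(\<Sum>a\<in>A. (w a)\<^sup>2) = 0"
      using that by (intro sum.neutral) auto
    with pos show False
      by simp
  qed
  have "(\<Sum>a\<in>A. (w a) ^ 4) < (\<Sum>a\<in>A. c * (w a)\<^sup>2)"
    using bound strict \<open>a0 \<in> A\<close> \<open>w a0 \<noteq> 0\<close> by (intro sum_strict_mono_ex1[OF \<open>finite A\<close>]) auto
  with moments show False
    by (simp add: sum_distrib_left)
qed

definition trace_char :: "nat \<Rightarrow> 'a::field \<Rightarrow> real" where
  "trace_char n t = (if abs_trace2 n t = 0 then 1 else -1)"

lemma trace_char_0 [simp]: "trace_char n 0 = 1"
  by (simp add: trace_char_def abs_trace2_def power_0_left)

lemma trace_char_mult_self: "trace_char n t * trace_char n t = 1"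
  by (simp add: trace_char_def)

context
  fixes n :: nat
  assumes char_2: "CHAR('a::{finite,field}) = 2"
    and card_2n: "card (UNIV::'a set) = 2 ^ n"
begin

lemma abs_trace2_add: "abs_trace2 n (x + y) = abs_trace2 n x + abs_trace2 n (y::'a)"
  unfolding abs_trace2_def
  by (simp add: sum.distrib freshmans_dream'[where n=i for i] char_2)

lemma abs_trace2_square: "abs_trace2 n (x::'a) ^ 2 = abs_trace2 n x"
proof -
  have "abs_trace2 n x ^ 2 = (\<Sum>i<n. x ^ 2 ^ Suc i)"
    unfolding abs_trace2_def
    by (simp add: freshmans_dream_sum'[where n=1] char_2 mult.commute flip: power_mult)
  also have "\<dots> = abs_trace2 n x - x + x ^ 2 ^ n"
    using sum.lessThan_Suc_shift[of "\<lambda>i. x ^ 2 ^ i" n] by (simp add: abs_trace2_def algebra_simps)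
  also have "x ^ 2 ^ n = x"
    using power_card_eq_self[of x] card_2n by simp
  finally show ?thesis
    by simp
qed

lemma abs_trace2_eq_0_or_1: "abs_trace2 n (x::'a) = 0 \<or> abs_trace2 n x = 1"
proof -
  have "abs_trace2 n x * (abs_trace2 n x - 1) = 0"
    using abs_trace2_square[of x] by (simp add: power2_eq_square algebra_simps)
  then show ?thesis
    by simp
qed

lemma trace_char_add: "trace_char n (s + t) = trace_char n s * trace_char n (t::'a)"
  using abs_trace2_eq_0_or_1[of s] abs_trace2_eq_0_or_1[of t] CHAR_2_add_self[OF char_2, of 1]
  unfolding trace_char_def abs_trace2_add by auto

lemma walsh_eq_sum_trace_char:
  "walsh n d a = (\<Sum>x\<in>UNIV. trace_char n (x ^ d) * trace_char n (a * (x::'a)))"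
  unfolding walsh_def trace_char_add[symmetric] by (simp add: trace_char_def)

lemma square_sum_trace_char:
  "(\<Sum>x\<in>UNIV. f x * trace_char n (a * (x::'a)))\<^sup>2
     = (\<Sum>s\<in>UNIV. (\<Sum>x\<in>UNIV. f x * f (x + s)) * trace_char n (a * s))"
proof -
  have "(\<Sum>x\<in>UNIV. f x * trace_char n (a * x))\<^sup>2
      = (\<Sum>x\<in>UNIV. \<Sum>y\<in>UNIV. f x * f y * trace_char n (a * (x + y)))"
    by (simp add: power2_eq_square sum_product trace_char_add distrib_left mult_ac)
  also have "\<dots> = (\<Sum>x\<in>UNIV. \<Sum>s\<in>UNIV. f x * f (x + s) * trace_char n (a * s))"
  proof (rule sum.cong[OF refl])
    fix x :: 'a
    show "(\<Sum>y\<in>UNIV. f x * f y * trace_char n (a * (x + y)))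
        = (\<Sum>s\<in>UNIV. f x * f (x + s) * trace_char n (a * s))"
      by (rule sum.reindex_bij_witness[of _ "\<lambda>y. x + y" "\<lambda>s. x + s"])
         (simp_all add: add.assoc[symmetric] CHAR_2_add_self[OF char_2])
  qed
  also have "\<dots> = (\<Sum>s\<in>UNIV. (\<Sum>x\<in>UNIV. f x * f (x + s)) * trace_char n (a * s))"
    by (subst sum.swap) (simp add: sum_distrib_right)
  finally show ?thesis .
qed

context
  fixes b :: 'a
  assumes nontrivial: "trace_char n b = -1"
begin

lemma sum_trace_char: "(\<Sum>t\<in>UNIV. trace_char n (t::'a)) = 0"
proof -
  have "(\<Sum>t\<in>UNIV. trace_char n (t::'a)) = (\<Sum>t\<in>UNIV. trace_char n (t + b))"
    using sum_UNIV_add_reindex[of "trace_char n" b] by simp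
  also have "\<dots> = - (\<Sum>t\<in>UNIV. trace_char n (t::'a))"
    by (simp add: trace_char_add nontrivial sum_negf)
  finally show ?thesis
    by simp
qed

lemma sum_trace_char_mult:
  "(\<Sum>a\<in>UNIV. trace_char n (a * (c::'a))) = (if c = 0 then real (card (UNIV::'a set)) else 0)"
proof (cases "c = 0")
  case False
  then show ?thesis
    using sum_UNIV_mult_reindex[OF False, of "trace_char n"] sum_trace_char
    by (simp add: mult.commute)
qed simp

lemma sum_square_sum_trace_char:
  "(\<Sum>a\<in>UNIV. (\<Sum>s\<in>UNIV. g s * trace_char n (a * s))\<^sup>2)
     = real (card (UNIV::'a set)) * (\<Sum>s\<in>UNIV. (g (s::'a))\<^sup>2)"
proof -
  have "(\<Sum>a\<in>UNIV. (\<Sum>s\<in>UNIV. g s * trace_char n (a * s))\<^sup>2)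
      = (\<Sum>a\<in>UNIV. \<Sum>s\<in>UNIV. \<Sum>t\<in>UNIV. g s * g t * trace_char n (a * (s + t)))"
    by (simp add: power2_eq_square sum_product trace_char_add distrib_left mult_ac)
  also have "\<dots> = (\<Sum>s\<in>UNIV. \<Sum>t\<in>UNIV. g s * g t * (\<Sum>a\<in>UNIV. trace_char n (a * (s + t))))"
    by (subst sum.swap, rule sum.cong[OF refl], subst sum.swap) (simp add: sum_distrib_left)
  also have "\<dots> = (\<Sum>s\<in>UNIV. g s * g s * real (card (UNIV::'a set)))"
    by (simp add: sum_trace_char_mult CHAR_2_add_eq_0_iff[OF char_2] if_distrib cong: if_cong)
  finally show ?thesis
    by (simp add: sum_distrib_left power2_eq_square mult_ac)
qed

lemma sum_walsh_square: "(\<Sum>a\<in>UNIV. (walsh n d (a::'a))\<^sup>2) = (real (card (UNIV::'a set)))\<^sup>2"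
  using sum_square_sum_trace_char[of "\<lambda>x. trace_char n (x ^ d)"]
  by (simp add: walsh_eq_sum_trace_char power2_eq_square trace_char_mult_self)

lemma sum_walsh_fourth:
  "(\<Sum>a\<in>UNIV. (walsh n d (a::'a)) ^ 4) = real (card (UNIV::'a set)) *
     (\<Sum>(x, y, s)\<in>(UNIV::('a \<times> 'a \<times> 'a) set). trace_char n (x ^ d + (x + s) ^ d + y ^ d + (y + s) ^ d))"
proof -
  define f where "f x = trace_char n ((x::'a) ^ d)" for x
  have walsh_square: "(walsh n d a)\<^sup>2
      = (\<Sum>s\<in>UNIV. (\<Sum>x\<in>UNIV. f x * f (x + s)) * trace_char n (a * s))" for a :: 'a
    unfolding walsh_eq_sum_trace_char f_def by (rule square_sum_trace_char)
  have "(\<Sum>a\<in>UNIV. (walsh n d (a::'a)) ^ 4)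
      = (\<Sum>a\<in>UNIV. (\<Sum>s\<in>UNIV. (\<Sum>x\<in>UNIV. f x * f (x + s)) * trace_char n (a * s))\<^sup>2)"
    by (simp flip: walsh_square power_mult)
  also have "\<dots> = real (card (UNIV::'a set)) * (\<Sum>s\<in>UNIV. (\<Sum>x\<in>UNIV. f x * f (x + s))\<^sup>2)"
    by (rule sum_square_sum_trace_char)
  also have "(\<Sum>s\<in>UNIV. (\<Sum>x\<in>UNIV. f x * f (x + s))\<^sup>2)
      = (\<Sum>s\<in>UNIV. \<Sum>x\<in>UNIV. \<Sum>y\<in>UNIV. f x * f (x + s) * (f y * f (y + s)))"
    by (simp add: power2_eq_square sum_product)
  also have "\<dots> = (\<Sum>x\<in>UNIV. \<Sum>y\<in>UNIV. \<Sum>s\<in>UNIV. f x * f (x + s) * (f y * f (y + s)))"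
    by (subst sum.swap, rule sum.cong[OF refl], rule sum.swap)
  also have "\<dots> = (\<Sum>(x, y, s)\<in>(UNIV::('a \<times> 'a \<times> 'a) set).
      trace_char n (x ^ d + (x + s) ^ d + y ^ d + (y + s) ^ d))"
    by (simp add: sum_UNIV_prod3 f_def trace_char_add mult_ac)
  finally show ?thesis .
qed

context
  fixes d :: nat
  assumes invertible: "invertible_exponent TYPE('a) d"
begin

lemma walsh_zero: "walsh n d (0::'a) = 0"
  using sum_UNIV_power_reindex[OF invertible, of "trace_char n"]
  by (simp add: walsh_eq_sum_trace_char sum_trace_char)

lemma sum_nonzero_trace_char_power_mult:
  "(\<Sum>l\<in>UNIV - {0}. trace_char n (l ^ d * (c::'a)))
     = (if c = 0 then real (card (UNIV::'a set)) else 0) - 1"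
proof -
  have "d > 0"
    using invertible by (simp add: invertible_exponent_def)
  then have "(\<Sum>l\<in>UNIV - {0}. trace_char n (l ^ d * c)) = (\<Sum>l\<in>UNIV. trace_char n (l ^ d * c)) - 1"
    by (simp add: sum_diff1 zero_power)
  also have "(\<Sum>l\<in>UNIV. trace_char n (l ^ d * c)) = (\<Sum>l\<in>UNIV. trace_char n (l * c))"
    by (rule sum_UNIV_power_reindex[OF invertible, of "\<lambda>t. trace_char n (t * c)"])
  finally show ?thesis
    by (simp add: sum_trace_char_mult)
qed

lemma sum_trace_char_homogeneous:
  fixes G :: "'b::finite \<Rightarrow> 'a" and scale :: "'a \<Rightarrow> 'b \<Rightarrow> 'b"
  assumes scale_bij: "\<And>l. l \<noteq> 0 \<Longrightarrow> bij (scale l)"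
    and homogeneous: "\<And>l p. G (scale l p) = l ^ d * G p"
  shows "(real (card (UNIV::'a set)) - 1) * (\<Sum>p\<in>UNIV. trace_char n (G p))
     = (\<Sum>p\<in>UNIV. (if G p = 0 then real (card (UNIV::'a set)) else 0) - 1)"
proof -
  let ?S = "\<Sum>p\<in>UNIV. trace_char n (G p)"
  have "(real (card (UNIV::'a set)) - 1) * ?S = (\<Sum>l\<in>UNIV - {0::'a}. ?S)"
    by (simp add: card_Diff_singleton of_nat_diff finite_UNIV_card_ge_0 Suc_leI)
  also have "\<dots> = (\<Sum>l\<in>UNIV - {0}. \<Sum>p\<in>UNIV. trace_char n (l ^ d * G p))"
  proof (rule sum.cong[OF refl])
    fix l :: 'a
    assume "l \<in> UNIV - {0}"
    then show "?S = (\<Sum>p\<in>UNIV. trace_char n (l ^ d * G p))"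
      using sum.reindex_bij_betw[OF scale_bij, of l "\<lambda>p. trace_char n (G p)"]
      by (simp add: homogeneous)
  qed
  also have "\<dots> = (\<Sum>p\<in>UNIV. \<Sum>l\<in>UNIV - {0}. trace_char n (l ^ d * G p))"
    by (rule sum.swap)
  finally show ?thesis
    by (simp add: sum_nonzero_trace_char_power_mult)
qed

lemma sum_trace_char_quartic_ge:
  "2 * (real (card (UNIV::'a set)))\<^sup>2
     \<le> (\<Sum>(x, y, s)\<in>(UNIV::('a \<times> 'a \<times> 'a) set). trace_char n (x ^ d + (x + s) ^ d + y ^ d + (y + s) ^ d))"
proof -
  let ?q = "real (card (UNIV::'a set))"
  define G where "G = (\<lambda>(x, y, s). x ^ d + (x + s) ^ d + y ^ d + ((y::'a) + s) ^ d)"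
  define scale where "scale = (\<lambda>l (x, y, s). (l * x, l * y, (l::'a) * s))"
  have "bij (scale l)" if "l \<noteq> 0" for l
    by (rule o_bij[of "scale (inverse l)"]) (auto simp: scale_def that fun_eq_iff)
  moreover have "G (scale l p) = l ^ d * G p" for l p
  proof (cases p)
    case (fields x y s)
    have factor: "l * x + l * s = l * (x + s)" "l * y + l * s = l * (y + s)"
      by (simp_all add: distrib_left)
    show ?thesis
      unfolding fields G_def scale_def
      by (simp only: prod.case factor power_mult_distrib) (simp add: distrib_left)
  qed
  ultimately have "(?q - 1) * (\<Sum>p\<in>UNIV. trace_char n (G p))
      = (\<Sum>p\<in>UNIV. (if G p = 0 then ?q else 0) - 1)"
    by (rule sum_trace_char_homogeneous)
  also have "\<dots> \<ge> (\<Sum>(x, y, s)\<in>(UNIV::('a \<times> 'a \<times> 'a) set).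
      (if s = 0 \<or> x = y \<or> x = y + s then ?q else 0) - 1)"
  proof (rule sum_mono, clarify)
    fix x y s :: 'a
    have cancel: "u + u = 0" "u + (u + w) = w" for u w :: 'a
      using CHAR_2_add_self[OF char_2] by (simp_all add: add.assoc[symmetric])
    have "G (x, y, s) = 0" if "s = 0 \<or> x = y \<or> x = y + s"
      using that by (auto simp: G_def ac_simps cancel)
    then show "(if s = 0 \<or> x = y \<or> x = y + s then ?q else 0) - 1
        \<le> (if G (x, y, s) = 0 then ?q else 0) - 1"
      by auto
  qed
  also have "(\<Sum>(x, y, s)\<in>(UNIV::('a \<times> 'a \<times> 'a) set).
      (if s = 0 \<or> x = y \<or> x = y + s then ?q else 0) - 1) = 2 * ?q\<^sup>2 * (?q - 1)"
    by (rule sum_three_planes) simp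
  finally have "2 * ?q\<^sup>2 * (?q - 1) \<le> (?q - 1) * (\<Sum>p\<in>UNIV. trace_char n (G p))" .
  moreover have "?q > 1"
    using two_le_card_UNIV_field[where 'a='a] by simp
  ultimately show ?thesis
    by (simp add: G_def case_prod_beta' mult.commute)
qed

lemma exists_walsh_ge_sqrt:
  "\<exists>a::'a. a \<noteq> 0 \<and> sqrt (2 * real (card (UNIV::'a set))) \<le> \<bar>walsh n d a\<bar>"
proof -
  let ?q = "real (card (UNIV :: 'a set))"
  have "2 * ?q * (\<Sum>a\<in>UNIV. (walsh n d (a::'a))\<^sup>2) = ?q * (2 * ?q\<^sup>2)"
    unfolding sum_walsh_square by (simp add: power2_eq_square)
  also have "\<dots> \<le> ?q * (\<Sum>(x, y, s)\<in>(UNIV::('a \<times> 'a \<times> 'a) set).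
      trace_char n (x ^ d + (x + s) ^ d + y ^ d + (y + s) ^ d))"
    using sum_trace_char_quartic_ge by (rule mult_left_mono) simp
  also have "\<dots> = (\<Sum>a\<in>UNIV. (walsh n d (a::'a)) ^ 4)"
    by (rule sum_walsh_fourth[symmetric])
  finally have moments: "2 * ?q * (\<Sum>a\<in>UNIV. (walsh n d (a::'a))\<^sup>2) \<le> (\<Sum>a\<in>UNIV. (walsh n d (a::'a)) ^ 4)" .
  have pos: "0 < (\<Sum>a\<in>UNIV. (walsh n d (a::'a))\<^sup>2)"
    unfolding sum_walsh_square using two_le_card_UNIV_field[where 'a='a] by simp
  obtain a :: 'a where "walsh n d a \<noteq> 0" and large: "2 * ?q \<le> (walsh n d a)\<^sup>2"
    using exists_square_ge_of_moments[OF finite_UNIV pos moments] by blast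
  then have "a \<noteq> 0"
    using walsh_zero by auto
  moreover have "sqrt (2 * ?q) \<le> \<bar>walsh n d a\<bar>"
    using real_sqrt_le_mono[OF large] by simp
  ultimately show ?thesis
    by blast
qed

end

end

end

theorem mainTheorem7:
  fixes n d :: nat
  assumes "CHAR('a::{finite,field}) = 2"
    and "card (UNIV :: 'a set) = 2 ^ n"
    and "odd n"
    and "invertible_exponent TYPE('a) d"
  shows "\<exists>a::'a. a \<noteq> 0 \<and> \<bar>walsh n d a\<bar> \<ge> sqrt (2 * real (card (UNIV :: 'a set)))"
proof (cases "\<exists>b::'a. trace_char n b = -1")
  case True
  then obtain b :: 'a where "trace_char n b = -1" ..
  then show ?thesis
    using exists_walsh_ge_sqrt[OF assms(1,2) _ assms(4)] by blast
next
  case False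
  let ?q = "real (card (UNIV :: 'a set))"
  from False have "walsh n d (1::'a) = ?q"
    by (simp add: walsh_eq_sum_trace_char[OF assms(1,2)] trace_char_def split: if_splits)
  moreover have "2 * ?q \<le> ?q * ?q"
    using two_le_card_UNIV_field[where 'a='a] by (intro mult_right_mono) auto
  then have "sqrt (2 * ?q) \<le> ?q"
    using real_sqrt_le_mono by fastforce
  ultimately show ?thesis
    by (intro exI[of _ 1]) simp
qed

end
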